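(* Let $l$ be a symmetric function on $\Omega\times\Omega$ and $v_1,\ldots,v_p$ functions on $\Omega$; let $\mathcal{X}=\{x_1,\ldots,x_n\}\subset\Omega$ be such that $\mathbf{V}=[v_j(x_i)]\in\mathbb{R}^{n\times p}$ has full column rank and $\widetilde{\mathbf{L}}=(\mathbf{I}-\mathbf{Q}\mathbf{Q}^\top)\mathbf{L}(\mathbf{I}-\mathbf{Q}\mathbf{Q}^\top)$ is positive semi-definite, where $\mathbf{L}=[l(x_i,x_j)]$ and $\mathbf{Q}$ is an orthonormal basis of the column span of $\mathbf{V}$. For $\varepsilon>0$ consider GP regression with prior covariance $k_\varepsilon(x,y)=l(x,y)+\varepsilon^{-1}\sum_{i=1}^p v_i(x)v_i(y)$, observations $\mathbf{y}$ at $\mathcal{X}$ and noise variance $\sigma^2>0$, with predictive variance $\mathrm{Var}_\varepsilon(f(x)\mid\mathbf{y})=k_\varepsilon(x,x)-\mathbf{k}^\varepsilon_{x,\mathcal{X}}(\mathbf{K}_\varepsilon+\sigma^2\mathbf{I})^{-1}(\mathbf{k}^\varepsilon_{x,\mathcal{X}})^\top$, where $\mathbf{k}^\varepsilon_{x,\mathcal{X}}=[k_\varepsilon(x,x_i)]_i$ and $\mathbf{K}_\varepsilon=[k_\varepsilon(x_i,x_j)]$. Then for every $x\in\Omega$, as $\varepsilon\to0$, $$\mathrm{Var}_\varepsilon(f(x)\mid\mathbf{y})=l(x,x)-(\mathbf{l}_{x,\mathcal{X}}\ \ \mathbf{v}_x)\begin{pmatrix}\mathbf{L}+\sigma^2\mathbf{I}&\mathbf{V}\\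 \mathbf{V}^\top&\mathbf{0}\end{pmatrix}^{-1}\begin{pmatrix}\mathbf{l}_{x,\mathcal{X}}^\top\\ \mathbf{v}_x^\top\end{pmatrix}+O(\varepsilon),$$ where $\mathbf{l}_{x,\mathcal{X}}=[l(x,x_1),\ldots,l(x,x_n)]$ and $\mathbf{v}_x=[v_1(x),\ldots,v_p(x)]$.
   Context: In particular the predictive variance does not diverge as $\varepsilon\to0$ even though the prior variance along the functions $v_i$ tends to infinity. *)

theory Defs
  imports "HOL-Analysis.Analysis" "HOL-Library.Landau_Symbols"
begin

definition psd_mat :: "real^'n^'n \<Rightarrow> bool" where
  "psd_mat A \<longleftrightarrow> (\<forall>z. 0 \<le> z \<bullet> (A *v z))"

definition k_eps :: "('a \<Rightarrow> 'a \<Rightarrow> real) \<Rightarrow> ('p::finite \<Rightarrow> 'a \<Rightarrow> real) \<Rightarrow> real \<Rightarrow> 'a \<Rightarrow> 'a \<Rightarrow> real" where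
  "k_eps l v \<epsilon> x y = l x y + inverse \<epsilon> * (\<Sum>i\<in>UNIV. v i x * v i y)"

definition gp_pred_var :: "('a \<Rightarrow> 'a \<Rightarrow> real) \<Rightarrow> ('n::finite \<Rightarrow> 'a) \<Rightarrow> real \<Rightarrow> 'a \<Rightarrow> real" where
  "gp_pred_var k X \<sigma>2 x =
     (let kx = (\<chi> i. k x (X i)) :: real^'n;
          K = (\<chi> i j. k (X i) (X j)) :: real^'n^'n
      in k x x - kx \<bullet> (matrix_inv (K + \<sigma>2 *\<^sub>R mat 1) *v kx))"

definition gram_mat :: "('a \<Rightarrow> 'a \<Rightarrow> real) \<Rightarrow> ('n::finite \<Rightarrow> 'a) \<Rightarrow> real^'n^'n" where
  "gram_mat l X = (\<chi> i j. l (X i) (X j))"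

definition design_mat :: "('p::finite \<Rightarrow> 'a \<Rightarrow> real) \<Rightarrow> ('n::finite \<Rightarrow> 'a) \<Rightarrow> real^'p^'n" where
  "design_mat v X = (\<chi> i j. v j (X i))"

definition block_mat :: "real^'n^'n \<Rightarrow> real^'p^'n \<Rightarrow> real \<Rightarrow> real^('n::finite + 'p::finite)^('n + 'p)" where
  "block_mat L V \<sigma>2 = (\<chi> a b. case (a, b) of
       (Inl i, Inl j) \<Rightarrow> L $ i $ j + \<sigma>2 * (if i = j then 1 else 0)
     | (Inl i, Inr j) \<Rightarrow> V $ i $ j
     | (Inr i, Inl j) \<Rightarrow> V $ j $ i
     | (Inr i, Inr j) \<Rightarrow> 0)"

definition limit_var :: "('a \<Rightarrow> 'a \<Rightarrow> real) \<Rightarrow> ('p::finite \<Rightarrow> 'a \<Rightarrow> real) \<Rightarrow> ('n::finite \<Rightarrow> 'a) \<Rightarrow> real \<Rightarrow> 'a \<Rightarrow> real" where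
  "limit_var l v X \<sigma>2 x =
     (let w = (\<chi> a. case a of Inl i \<Rightarrow> l x (X i) | Inr j \<Rightarrow> v j x) :: real^('n + 'p)
      in l x x - w \<bullet> (matrix_inv (block_mat (gram_mat l X) (design_mat v X) \<sigma>2) *v w))"

end

theory Submission
  imports Defs
begin

(* Eliminating the auxiliary unknowns w = eps^-1 (V^T u - v_x) shows that the predictive variance
   for k_eps equals l(x,x) - z^T B_eps^-1 z exactly, where z = (l_{x,X}, v_x) and B_eps is the
   saddle-point matrix with -eps I in its lower right block: the eps^-1 terms of the prior cancel.
   The matrix B_0 is invertible because V is injective and L + sigma^2 I is positive definite on
   ker V^T = ker Q^T, which is where the projected psd hypothesis applies. So B_eps = B_0 - eps E
   is a perturbation of an invertible matrix, and the solution of B_eps y = z moves by O(eps). *)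

lemma sum_UNIV_Plus:
  "(\<Sum>a\<in>(UNIV::('n::finite + 'p::finite) set). f a) = (\<Sum>i\<in>UNIV. f (Inl i)) + (\<Sum>j\<in>UNIV. f (Inr j))"
  using sum.Plus[of "UNIV::'n set" "UNIV::'p set" f] by (simp add: comp_def)

lemma invertible_iff_ker_trivial:
  fixes A :: "'a::field^'n^'n"
  shows "invertible A \<longleftrightarrow> (\<forall>x. A *v x = 0 \<longrightarrow> x = 0)"
  by (simp add: invertible_left_inverse matrix_left_invertible_ker)

lemma matrix_inv_solve_iff:
  fixes A :: "'a::comm_semiring_1^'n^'n"
  assumes "invertible A"
  shows "A *v y = b \<longleftrightarrow> y = matrix_inv A *v b"
proof -
  have "A ** matrix_inv A = mat 1 \<and> matrix_inv A ** A = mat 1"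
    using assms unfolding invertible_def matrix_inv_def by (rule someI_ex)
  then show ?thesis
    by (metis matrix_vector_mul_assoc matrix_vector_mul_lid)
qed

lemma matrix_inv_mult_cancel:
  fixes A :: "'a::comm_semiring_1^'n^'n"
  shows "invertible A \<Longrightarrow> A *v (matrix_inv A *v b) = b"
  by (simp add: matrix_inv_solve_iff)

section \<open>Bordered matrices\<close>

definition join_vec :: "'a^'n \<Rightarrow> 'a^'p \<Rightarrow> 'a^('n::finite + 'p::finite)" where
  "join_vec u w = (\<chi> a. case a of Inl i \<Rightarrow> u $ i | Inr j \<Rightarrow> w $ j)"

lemma join_vec_cases:
  obtains u w where "y = join_vec u w"
proof
  show "y = join_vec (\<chi> i. y $ Inl i) (\<chi> j. y $ Inr j)"
    by (simp add: join_vec_def vec_eq_iff split: sum.split)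
qed

lemma join_vec_eq_iff: "join_vec u w = join_vec u' w' \<longleftrightarrow> u = u' \<and> w = w'"
proof
  assume "join_vec u w = join_vec u' w'"
  then have "join_vec u w $ Inl i = join_vec u' w' $ Inl i" "join_vec u w $ Inr j = join_vec u' w' $ Inr j"
    for i j by simp_all
  then show "u = u' \<and> w = w'" by (simp add: join_vec_def vec_eq_iff)
qed simp

lemma join_vec_zero [simp]: "join_vec 0 0 = 0"
  by (simp add: join_vec_def vec_eq_iff split: sum.split)

lemma inner_join_vec: "join_vec u w \<bullet> join_vec u' w' = u \<bullet> u' + w \<bullet> w'"
  by (simp add: inner_vec_def join_vec_def sum_UNIV_Plus)

definition bordered_mat :: "'a^'n^'n \<Rightarrow> 'a^'p^'n \<Rightarrow> 'a::zero \<Rightarrow> 'a^('n::finite + 'p::finite)^('n + 'p)" where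
  "bordered_mat A V d = (\<chi> a b. case (a, b) of
       (Inl i, Inl j) \<Rightarrow> A $ i $ j
     | (Inl i, Inr j) \<Rightarrow> V $ i $ j
     | (Inr i, Inl j) \<Rightarrow> V $ j $ i
     | (Inr i, Inr j) \<Rightarrow> (if i = j then d else 0))"

lemma bordered_mat_mult_join_vec:
  fixes A :: "'a::comm_semiring_1^'n::finite^'n"
  shows "bordered_mat A V d *v join_vec u w = join_vec (A *v u + V *v w) (transpose V *v u + d *s w)"
  by (simp add: vec_eq_iff bordered_mat_def join_vec_def matrix_vector_mult_def transpose_def
      sum_UNIV_Plus if_distrib[of "\<lambda>c. c * _"] cong: if_cong split: sum.split)

lemma block_mat_eq_bordered_mat:
  "block_mat L V \<sigma>2 = bordered_mat (L + \<sigma>2 *\<^sub>R mat 1) V 0"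
  by (simp add: block_mat_def bordered_mat_def vec_eq_iff mat_def split: sum.split)

lemma bordered_mat_diagonal_shift:
  "bordered_mat A V (- \<epsilon>) = bordered_mat A V 0 - \<epsilon> *\<^sub>R bordered_mat 0 0 1"
  by (simp add: bordered_mat_def vec_eq_iff split: sum.split)

section \<open>Schur complement of a bordered matrix\<close>

lemma bordered_mat_solve_iff:
  fixes A :: "real^'n^'n" and V :: "real^'p^'n"
  assumes "\<epsilon> \<noteq> 0"
  shows "bordered_mat A V (- \<epsilon>) *v join_vec u w = join_vec a b \<longleftrightarrow>
    (A + inverse \<epsilon> *\<^sub>R (V ** transpose V)) *v u = a + inverse \<epsilon> *\<^sub>R (V *v b) \<and>
    w = inverse \<epsilon> *\<^sub>R (transpose V *v u - b)"
proof -
  have bottom: "transpose V *v u + (- \<epsilon>) *\<^sub>R w = b \<longleftrightarrow> w = inverse \<epsilon> *\<^sub>R (transpose V *v u - b)"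
    using real_vector_affinity_eq[of "- \<epsilon>" w "transpose V *v u" b] assms
    by (simp add: add.commute scaleR_diff_right del: transpose_matrix_vector)
  have top: "A *v u + V *v (inverse \<epsilon> *\<^sub>R (transpose V *v u - b)) = a \<longleftrightarrow>
      (A + inverse \<epsilon> *\<^sub>R (V ** transpose V)) *v u = a + inverse \<epsilon> *\<^sub>R (V *v b)"
  proof -
    have "V *v (inverse \<epsilon> *\<^sub>R (transpose V *v u - b))
        = inverse \<epsilon> *\<^sub>R ((V ** transpose V) *v u) - inverse \<epsilon> *\<^sub>R (V *v b)"
      by (simp add: matrix_vector_mult_scaleR matrix_vector_mult_diff_distrib matrix_vector_mul_assoc
          scaleR_diff_right del: transpose_matrix_vector)
    moreover have "(A + inverse \<epsilon> *\<^sub>R (V ** transpose V)) *v u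
        = A *v u + inverse \<epsilon> *\<^sub>R ((V ** transpose V) *v u)"
      by (simp add: matrix_vector_mult_add_rdistrib scaleR_matrix_vector_assoc)
    ultimately show ?thesis
      by (auto simp: algebra_simps)
  qed
  have "bordered_mat A V (- \<epsilon>) *v join_vec u w = join_vec a b \<longleftrightarrow>
      A *v u + V *v w = a \<and> transpose V *v u + (- \<epsilon>) *\<^sub>R w = b"
    by (simp add: bordered_mat_mult_join_vec join_vec_eq_iff scalar_mult_eq_scaleR
        del: transpose_matrix_vector)
  with bottom top show ?thesis
    by metis
qed

lemma schur_complement_invertible:
  fixes A :: "real^'n^'n" and V :: "real^'p^'n"
  assumes "\<epsilon> \<noteq> 0" and "invertible (bordered_mat A V (- \<epsilon>))"
  shows "invertible (A + inverse \<epsilon> *\<^sub>R (V ** transpose V))"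
  unfolding invertible_iff_ker_trivial
proof (intro allI impI)
  fix u assume "(A + inverse \<epsilon> *\<^sub>R (V ** transpose V)) *v u = 0"
  then have "bordered_mat A V (- \<epsilon>) *v join_vec u (inverse \<epsilon> *\<^sub>R (transpose V *v u)) = 0"
    using bordered_mat_solve_iff[OF assms(1), of A V u _ 0 0] by (simp del: transpose_matrix_vector)
  then have "join_vec u (inverse \<epsilon> *\<^sub>R (transpose V *v u)) = 0"
    using assms(2) invertible_iff_ker_trivial by blast
  then show "u = 0"
    by (simp flip: join_vec_zero add: join_vec_eq_iff)
qed

lemma schur_complement_quadratic_form:
  fixes A :: "real^'n^'n" and V :: "real^'p^'n" and a :: "real^'n" and b :: "real^'p"
  assumes "\<epsilon> \<noteq> 0" and B: "invertible (bordered_mat A V (- \<epsilon>))"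
  defines "c \<equiv> a + inverse \<epsilon> *\<^sub>R (V *v b)"
  shows "c \<bullet> (matrix_inv (A + inverse \<epsilon> *\<^sub>R (V ** transpose V)) *v c)
    = join_vec a b \<bullet> (matrix_inv (bordered_mat A V (- \<epsilon>)) *v join_vec a b) + inverse \<epsilon> * (b \<bullet> b)"
proof -
  obtain u w where uw: "matrix_inv (bordered_mat A V (- \<epsilon>)) *v join_vec a b = join_vec u w"
    by (rule join_vec_cases)
  then have "bordered_mat A V (- \<epsilon>) *v join_vec u w = join_vec a b"
    using B by (simp add: matrix_inv_solve_iff)
  then have Ku: "(A + inverse \<epsilon> *\<^sub>R (V ** transpose V)) *v u = c"
    and w: "w = inverse \<epsilon> *\<^sub>R (transpose V *v u - b)"
    by (simp_all only: bordered_mat_solve_iff[OF assms(1)] c_def)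
  have "matrix_inv (A + inverse \<epsilon> *\<^sub>R (V ** transpose V)) *v c = u"
    using Ku schur_complement_invertible[OF assms(1) B] by (simp add: matrix_inv_solve_iff)
  moreover have "(V *v b) \<bullet> u = b \<bullet> (transpose V *v u)"
    by (metis dot_lmul_matrix inner_commute transpose_matrix_vector)
  then have "c \<bullet> u = a \<bullet> u + inverse \<epsilon> * (b \<bullet> (transpose V *v u))"
    by (simp add: c_def inner_add_left del: transpose_matrix_vector)
  ultimately show ?thesis
    by (simp add: uw inner_join_vec w algebra_simps del: transpose_matrix_vector)
qed

section \<open>Invertibility of the saddle-point matrix\<close>

lemma transpose_mult_eq_0_iff_orthogonal_span_columns:
  fixes A :: "real^'m^'n"
  shows "transpose A *v u = 0 \<longleftrightarrow> (\<forall>c\<in>span (columns A). orthogonal u c)"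
proof -
  have component: "(transpose A *v u) $ k = u \<bullet> column k A" for k
    by (simp add: matrix_vector_mult_def transpose_def column_def inner_vec_def mult.commute)
  show ?thesis
  proof
    assume "transpose A *v u = 0"
    then have "u \<bullet> column k A = 0" for k
      by (simp only: component [symmetric] zero_index)
    then have "orthogonal u c" if "c \<in> columns A" for c
      using that by (auto simp: columns_def orthogonal_def)
    then show "\<forall>c\<in>span (columns A). orthogonal u c"
      using orthogonal_to_span by blast
  next
    assume "\<forall>c\<in>span (columns A). orthogonal u c"
    moreover have "column k A \<in> span (columns A)" for k
      by (auto simp: columns_def intro: span_base)
    ultimately have "orthogonal u (column k A)" for k
      by blast
    then show "transpose A *v u = 0"
      unfolding vec_eq_iff component by (simp add: orthogonal_def)
  qed
qed

lemma psd_projected_quadratic_form_nonneg: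
  fixes Q :: "real^'p^'n" and L :: "real^'n^'n"
  assumes psd: "psd_mat ((mat 1 - Q ** transpose Q) ** L ** (mat 1 - Q ** transpose Q))"
    and Qu: "transpose Q *v u = 0"
  shows "0 \<le> u \<bullet> (L *v u)"
proof -
  let ?P = "mat 1 - Q ** transpose Q"
  have Pu: "?P *v u = u"
    using Qu by (simp add: matrix_vector_mult_diff_rdistrib flip: matrix_vector_mul_assoc)
  have "transpose ?P = ?P"
    by (simp add: transpose_def matrix_matrix_mult_def mat_def vec_eq_iff mult.commute eq_commute)
  then have uP: "u v* ?P = u"
    using Pu by (metis transpose_matrix_vector)
  have "u \<bullet> (?P ** L ** ?P *v u) = (u v* ?P) \<bullet> (L *v (?P *v u))"
    by (simp only: matrix_vector_mul_assoc [symmetric] dot_lmul_matrix)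
  also have "\<dots> = u \<bullet> (L *v u)"
    by (simp only: uP Pu)
  finally show ?thesis
    using psd by (metis psd_mat_def)
qed

lemma bordered_mat_invertible:
  fixes A :: "real^'n^'n" and V :: "real^'p^'n"
  assumes V_inj: "inj ((*v) V)"
    and A_pos: "\<And>u. transpose V *v u = 0 \<Longrightarrow> u \<noteq> 0 \<Longrightarrow> 0 < u \<bullet> (A *v u)"
  shows "invertible (bordered_mat A V 0)"
  unfolding invertible_iff_ker_trivial
proof (intro allI impI)
  fix y assume "bordered_mat A V 0 *v y = 0"
  moreover obtain u w where y: "y = join_vec u w"
    by (rule join_vec_cases)
  ultimately have top: "A *v u + V *v w = 0" and bottom: "transpose V *v u = 0"
    by (simp_all add: bordered_mat_mult_join_vec flip: join_vec_zero add: join_vec_eq_iff)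
  have "u \<bullet> (V *v w) = 0"
    using bottom by (simp flip: dot_lmul_matrix)
  then have "u \<bullet> (A *v u) = 0"
    using top by (metis add_eq_0_iff inner_minus_right neg_equal_0_iff_equal)
  then have "u = 0"
    using A_pos bottom by force
  then have "w = 0"
    using top V_inj by (metis add_0 injD matrix_vector_mult_0_right)
  with \<open>u = 0\<close> show "y = 0"
    by (simp add: y)
qed

section \<open>Perturbation of an invertible matrix\<close>

lemma perturbed_solution_bound:
  fixes B E :: "real^'m^'m"
  assumes B: "invertible B"
    and "0 \<le> C" and C: "\<And>t. norm (matrix_inv B *v (E *v t)) \<le> C * norm t"
    and small: "\<bar>\<epsilon>\<bar> * C \<le> 1/2"
    and eq: "(B - \<epsilon> *\<^sub>R E) *v y = B *v y0"
  shows "norm (y - y0) \<le> 2 * C * \<bar>\<epsilon>\<bar> * norm y0"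
proof -
  have "B *v (y - y0) = B *v y - (B - \<epsilon> *\<^sub>R E) *v y"
    by (simp add: eq matrix_vector_mult_diff_distrib)
  also have "\<dots> = \<epsilon> *\<^sub>R (E *v y)"
    by (simp add: matrix_vector_mult_diff_rdistrib scaleR_matrix_vector_assoc)
  finally have "y - y0 = \<epsilon> *\<^sub>R (matrix_inv B *v (E *v y))"
    using B by (simp add: matrix_inv_solve_iff matrix_vector_mult_scaleR)
  then have close: "norm (y - y0) \<le> \<bar>\<epsilon>\<bar> * C * norm y"
    using C[of y] by (simp add: mult.assoc mult_left_mono)
  have "norm y \<le> norm y0 + norm (y - y0)"
    by (metis norm_triangle_sub)
  also have "\<dots> \<le> norm y0 + 1/2 * norm y"
    using close mult_right_mono[OF small norm_ge_zero[of y]] by linarith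
  finally have "norm y \<le> 2 * norm y0"
    by linarith
  then have "\<bar>\<epsilon>\<bar> * C * norm y \<le> \<bar>\<epsilon>\<bar> * C * (2 * norm y0)"
    using \<open>0 \<le> C\<close> by (intro mult_left_mono) auto
  with close show ?thesis
    by (simp add: mult_ac)
qed

lemma perturbed_matrix_inv:
  fixes B E :: "real^'m^'m"
  assumes B: "invertible B"
  shows eventually_perturbed_invertible: "\<forall>\<^sub>F \<epsilon> in nhds 0. invertible (B - \<epsilon> *\<^sub>R E)"
    and perturbed_solution_bigo:
      "(\<lambda>\<epsilon>. norm (matrix_inv (B - \<epsilon> *\<^sub>R E) *v z - matrix_inv B *v z)) \<in> O[nhds 0](\<lambda>\<epsilon>. \<epsilon>)"
proof -
  obtain C where "0 < C" and C: "\<And>t. norm (matrix_inv B *v (E *v t)) \<le> C * norm t"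
    using linear_bounded_pos[OF matrix_vector_mul_linear[of "matrix_inv B ** E"]]
    by (metis matrix_vector_mul_assoc)
  have small: "\<forall>\<^sub>F \<epsilon> in nhds 0. \<bar>\<epsilon>\<bar> * C \<le> 1/2"
    unfolding eventually_nhds_metric
    using \<open>0 < C\<close> by (intro exI[of _ "1 / (2 * C)"]) (auto simp: dist_real_def field_simps)
  have invertible: "invertible (B - \<epsilon> *\<^sub>R E)" if "\<bar>\<epsilon>\<bar> * C \<le> 1/2" for \<epsilon>
    unfolding invertible_iff_ker_trivial
    using perturbed_solution_bound[OF B _ C that, of _ 0] \<open>0 < C\<close> by simp
  show "\<forall>\<^sub>F \<epsilon> in nhds 0. invertible (B - \<epsilon> *\<^sub>R E)"
    using small by (rule eventually_mono) (rule invertible)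
  have "norm (matrix_inv (B - \<epsilon> *\<^sub>R E) *v z - matrix_inv B *v z) \<le> 2 * C * norm (matrix_inv B *v z) * \<bar>\<epsilon>\<bar>"
    if "\<bar>\<epsilon>\<bar> * C \<le> 1/2" for \<epsilon>
    using perturbed_solution_bound[OF B _ C that,
        of "matrix_inv (B - \<epsilon> *\<^sub>R E) *v z" "matrix_inv B *v z"] \<open>0 < C\<close>
    by (simp add: matrix_inv_mult_cancel B invertible[OF that] mult_ac)
  then show "(\<lambda>\<epsilon>. norm (matrix_inv (B - \<epsilon> *\<^sub>R E) *v z - matrix_inv B *v z)) \<in> O[nhds 0](\<lambda>\<epsilon>. \<epsilon>)"
    by (intro bigoI[where c = "2 * C * norm (matrix_inv B *v z)"] eventually_mono[OF small]) simp
qed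

section \<open>Gaussian process predictive variance\<close>

lemma gram_mat_k_eps:
  "gram_mat (k_eps l v \<epsilon>) X = gram_mat l X + inverse \<epsilon> *\<^sub>R (design_mat v X ** transpose (design_mat v X))"
  by (simp add: vec_eq_iff gram_mat_def k_eps_def design_mat_def matrix_matrix_mult_def transpose_def)

lemma gp_pred_var_k_eps_eq_bordered:
  fixes l :: "'a \<Rightarrow> 'a \<Rightarrow> real" and v :: "'p::finite \<Rightarrow> 'a \<Rightarrow> real" and X :: "'n::finite \<Rightarrow> 'a"
    and \<sigma>2 :: real and x :: 'a
  defines "A \<equiv> gram_mat l X + \<sigma>2 *\<^sub>R mat 1"
    and "z \<equiv> join_vec (\<chi> i. l x (X i)) (\<chi> j. v j x)"
  assumes "\<epsilon> \<noteq> 0" and "invertible (bordered_mat A (design_mat v X) (- \<epsilon>))"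
  shows "gp_pred_var (k_eps l v \<epsilon>) X \<sigma>2 x
    = l x x - z \<bullet> (matrix_inv (bordered_mat A (design_mat v X) (- \<epsilon>)) *v z)"
proof -
  let ?V = "design_mat v X" and ?vx = "\<chi> j. v j x"
  have K: "gram_mat (k_eps l v \<epsilon>) X + \<sigma>2 *\<^sub>R mat 1 = A + inverse \<epsilon> *\<^sub>R (?V ** transpose ?V)"
    by (simp add: A_def gram_mat_k_eps)
  have kx: "(\<chi> i. k_eps l v \<epsilon> x (X i)) = (\<chi> i. l x (X i)) + inverse \<epsilon> *\<^sub>R (?V *v ?vx)"
    by (simp add: vec_eq_iff k_eps_def design_mat_def matrix_vector_mult_def mult.commute)
  have kxx: "k_eps l v \<epsilon> x x = l x x + inverse \<epsilon> * (?vx \<bullet> ?vx)"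
    by (simp add: k_eps_def inner_vec_def)
  have "gp_pred_var (k_eps l v \<epsilon>) X \<sigma>2 x = k_eps l v \<epsilon> x x
      - (\<chi> i. k_eps l v \<epsilon> x (X i)) \<bullet> (matrix_inv (gram_mat (k_eps l v \<epsilon>) X + \<sigma>2 *\<^sub>R mat 1) *v (\<chi> i. k_eps l v \<epsilon> x (X i)))"
    by (simp add: gp_pred_var_def gram_mat_def Let_def)
  then show ?thesis
    unfolding K kx kxx schur_complement_quadratic_form[OF assms(3,4)] z_def by simp
qed

lemma limit_var_eq_bordered:
  fixes l :: "'a \<Rightarrow> 'a \<Rightarrow> real" and v :: "'p::finite \<Rightarrow> 'a \<Rightarrow> real" and X :: "'n::finite \<Rightarrow> 'a"
    and x :: 'a
  defines "z \<equiv> join_vec (\<chi> i. l x (X i)) (\<chi> j. v j x)"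
  shows "limit_var l v X \<sigma>2 x = l x x
    - z \<bullet> (matrix_inv (bordered_mat (gram_mat l X + \<sigma>2 *\<^sub>R mat 1) (design_mat v X) 0) *v z)"
proof -
  have "(\<chi> a. case a of Inl i \<Rightarrow> l x (X i) | Inr j \<Rightarrow> v j x) = z"
    by (simp add: z_def join_vec_def vec_eq_iff split: sum.split)
  then show ?thesis
    by (simp add: limit_var_def block_mat_eq_bordered_mat)
qed

lemma saddle_point_mat_invertible:
  fixes l :: "'a \<Rightarrow> 'a \<Rightarrow> real" and v :: "'p::finite \<Rightarrow> 'a \<Rightarrow> real" and X :: "'n::finite \<Rightarrow> 'a"
    and Q :: "real^'p^'n"
  assumes full_rank: "rank (design_mat v X) = CARD('p)"
    and Q_span: "span (columns Q) = span (columns (design_mat v X))"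
    and psd: "psd_mat ((mat 1 - Q ** transpose Q) ** gram_mat l X ** (mat 1 - Q ** transpose Q))"
    and noise: "\<sigma>2 > 0"
  shows "invertible (bordered_mat (gram_mat l X + \<sigma>2 *\<^sub>R mat 1) (design_mat v X) 0)"
proof (rule bordered_mat_invertible)
  show "inj ((*v) (design_mat v X))"
    using full_rank by (simp add: full_rank_injective)
next
  fix u assume "transpose (design_mat v X) *v u = 0" and "u \<noteq> 0"
  then have "transpose Q *v u = 0"
    using Q_span by (simp only: transpose_mult_eq_0_iff_orthogonal_span_columns)
  then have "0 \<le> u \<bullet> (gram_mat l X *v u)"
    by (rule psd_projected_quadratic_form_nonneg[OF psd])
  moreover have "0 < \<sigma>2 * (u \<bullet> u)"
    using noise \<open>u \<noteq> 0\<close> by simp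
  ultimately show "0 < u \<bullet> ((gram_mat l X + \<sigma>2 *\<^sub>R mat 1) *v u)"
    by (simp add: matrix_vector_mult_add_rdistrib inner_add_right
        flip: scaleR_matrix_vector_assoc)
qed

theorem mainTheorem8:
  fixes l :: "'a \<Rightarrow> 'a \<Rightarrow> real"
    and v :: "'p::finite \<Rightarrow> 'a \<Rightarrow> real"
    and X :: "'n::finite \<Rightarrow> 'a"
    and Q :: "real^'p^'n"
    and \<sigma>2 :: real
    and x :: 'a
  assumes sym: "\<And>y z. l y z = l z y"
    and full_rank: "rank (design_mat v X) = CARD('p)"
    and Q_orth: "transpose Q ** Q = mat 1"
    and Q_span: "span (columns Q) = span (columns (design_mat v X))"
    and psd: "psd_mat ((mat 1 - Q ** transpose Q) ** gram_mat l X ** (mat 1 - Q ** transpose Q))"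
    and noise: "\<sigma>2 > 0"
  shows "(\<lambda>\<epsilon>. gp_pred_var (k_eps l v \<epsilon>) X \<sigma>2 x - limit_var l v X \<sigma>2 x)
           \<in> O[at_right 0](\<lambda>\<epsilon>. \<epsilon>)"
proof -
  define z where "z = join_vec (\<chi> i. l x (X i)) (\<chi> j. v j x)"
  define B where "B \<epsilon> = bordered_mat (gram_mat l X + \<sigma>2 *\<^sub>R mat 1) (design_mat v X) (- \<epsilon>)" for \<epsilon>
  define d where "d \<epsilon> = matrix_inv (B \<epsilon>) *v z - matrix_inv (B 0) *v z" for \<epsilon>
  have B0: "invertible (B 0)"
    using saddle_point_mat_invertible[OF full_rank Q_span psd noise] by (simp add: B_def)
  have B_shift: "B 0 - \<epsilon> *\<^sub>R bordered_mat 0 0 1 = B \<epsilon>" for \<epsilon>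
    unfolding B_def by (subst bordered_mat_diagonal_shift) simp
  have B_inv: "\<forall>\<^sub>F \<epsilon> in nhds 0. invertible (B \<epsilon>)"
    using eventually_perturbed_invertible[OF B0, of "bordered_mat 0 0 1"] by (simp only: B_shift)
  have d_bigo: "(\<lambda>\<epsilon>. norm (d \<epsilon>)) \<in> O[nhds 0](\<lambda>\<epsilon>. \<epsilon>)"
    using perturbed_solution_bigo[OF B0, of "bordered_mat 0 0 1"] by (simp only: d_def B_shift)
  have at_right_le_nhds: "at_right (0::real) \<le> nhds 0"
    by (simp add: at_within_def)
  have "\<forall>\<^sub>F \<epsilon> in at_right 0. gp_pred_var (k_eps l v \<epsilon>) X \<sigma>2 x - limit_var l v X \<sigma>2 x = - (z \<bullet> d \<epsilon>)"
    using eventually_at_right_less[of 0] filter_leD[OF at_right_le_nhds B_inv]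
  proof eventually_elim
    case (elim \<epsilon>)
    then show ?case
      by (simp add: gp_pred_var_k_eps_eq_bordered limit_var_eq_bordered B_def d_def z_def inner_diff_right)
  qed
  moreover have "(\<lambda>\<epsilon>. - (z \<bullet> d \<epsilon>)) \<in> O[at_right 0](\<lambda>\<epsilon>. norm (d \<epsilon>))"
    by (intro bigoI[where c = "norm z"] always_eventually allI) (simp add: Cauchy_Schwarz_ineq2)
  ultimately show ?thesis
    using landau_o.big.filter_mono[OF at_right_le_nhds d_bigo]
    by (simp add: landau_o.big.in_cong landau_o.big_trans)
qed

end
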